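(* Let $n > 1$ be a square-free positive integer. Then $n$ is $\pi/4$-congruent if and only if $n$ is the square-free part of $rs(r^2+2rs-s^2)$ for some relatively prime positive integers $r,s$. Likewise, $n$ is $3\pi/4$-congruent if and only if $n$ is the square-free part of $rs(r^2-2rs-s^2)$ for some relatively prime positive integers $r,s$.
   Context: For $\theta \in \{\pi/4,3\pi/4\}$, a positive integer $n$ is $\theta$-congruent if there exist positive rationals $a,b,c$ such that the triangle with sides $a$, $b\sqrt2$, $c$ has angle $\theta$ opposite $c$ and area $n$; equivalently $ab = 2n$ and $c^2 = a^2+2b^2-2ab$ (for $\theta = \pi/4$), resp. $c^2 = a^2+2b^2+2ab$ (for $\theta=3\pi/4$). The square-free part of a non-zero integer $N$ is the unique square-free integer $n$ with $N/n$ a square of a rational number. *)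

theory Defs
  imports Complex_Main "HOL-Computational_Algebra.Squarefree"
begin

text \<open>A positive integer n is pi/4-congruent iff there are positive rationals a, b, c
  with a b = 2 n and c^2 = a^2 + 2 b^2 - 2 a b (triangle with sides a, b sqrt 2, c,
  angle pi/4 opposite c, area n).\<close>
definition pi4_congruent :: "nat \<Rightarrow> bool" where
  "pi4_congruent n \<longleftrightarrow> (\<exists>a b c :: rat. a > 0 \<and> b > 0 \<and> c > 0 \<and>
      a * b = 2 * of_nat n \<and> c^2 = a^2 + 2 * b^2 - 2 * a * b)"

definition three_pi4_congruent :: "nat \<Rightarrow> bool" where
  "three_pi4_congruent n \<longleftrightarrow> (\<exists>a b c :: rat. a > 0 \<and> b > 0 \<and> c > 0 \<and>
      a * b = 2 * of_nat n \<and> c^2 = a^2 + 2 * b^2 + 2 * a * b)"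

definition is_squarefree_part :: "int \<Rightarrow> int \<Rightarrow> bool" where
  "is_squarefree_part n N \<longleftrightarrow> N \<noteq> 0 \<and> squarefree n \<and>
      (\<exists>q :: rat. of_int N / of_int n = q^2)"

end

theory Submission
  imports Defs
begin

text \<open>By the law of cosines both conditions read c^2 = a^2 + 2 b^2 - 2 \<sigma> a b with
  \<sigma> = sqrt 2 cos \<theta> = \<plusminus>1. Rational points on this conic are parametrised by the slope
  s/r = b/(c + a - \<sigma> b): up to a common rational factor, (a, b, c) = (P, 2 r s, r^2 + s^2)
  with P = r^2 + 2 \<sigma> r s - s^2. The area condition a b = 2 n then says that r s P
  is n times a rational square.\<close>

definition sigma_congruent :: "int \<Rightarrow> nat \<Rightarrow> bool" where
  "sigma_congruent \<sigma> n \<longleftrightarrow> (\<exists>a b c :: rat. a > 0 \<and> b > 0 \<and> c > 0 \<and>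
      a * b = 2 * of_nat n \<and> c^2 = a^2 + 2 * b^2 - 2 * of_int \<sigma> * a * b)"

lemma pi4_congruent_iff_sigma_congruent: "pi4_congruent n \<longleftrightarrow> sigma_congruent 1 n"
  by (simp add: pi4_congruent_def sigma_congruent_def)

lemma three_pi4_congruent_iff_sigma_congruent:
  "three_pi4_congruent n \<longleftrightarrow> sigma_congruent (-1) n"
  by (simp add: three_pi4_congruent_def sigma_congruent_def)

lemma squarefree_int_of_nat:
  assumes "squarefree n"
  shows "squarefree (int n)"
proof (rule squarefreeI)
  fix x :: int
  assume "x ^ 2 dvd int n"
  then have "int (nat \<bar>x\<bar> ^ 2) dvd int n"
    by (simp add: power_abs)
  then have "nat \<bar>x\<bar> ^ 2 dvd n"
    by (simp only: int_dvd_int_iff)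
  then have "nat \<bar>x\<bar> dvd 1"
    by (rule squarefreeD[OF assms])
  then show "x dvd 1"
    by simp
qed

lemma is_squarefree_part_iff:
  assumes "n > 0"
  shows "is_squarefree_part (int n) N \<longleftrightarrow>
    squarefree (int n) \<and> (\<exists>q :: rat. q > 0 \<and> of_int N = of_nat n * q^2)"
proof -
  have "(\<exists>q :: rat. N \<noteq> 0 \<and> of_int N / of_nat n = q^2) \<longleftrightarrow>
        (\<exists>q :: rat. q > 0 \<and> of_int N = of_nat n * q^2)"
  proof
    assume "\<exists>q :: rat. N \<noteq> 0 \<and> of_int N / of_nat n = q^2"
    then obtain q :: rat where "N \<noteq> 0" "of_int N = of_nat n * q^2"
      using assms by (auto simp: field_simps)
    then show "\<exists>q :: rat. q > 0 \<and> of_int N = of_nat n * q^2"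
      by (intro exI[of _ "\<bar>q\<bar>"]) auto
  next
    assume "\<exists>q :: rat. q > 0 \<and> of_int N = of_nat n * q^2"
    then obtain q :: rat where "q > 0" "of_int N = of_nat n * q^2"
      by blast
    then show "\<exists>q :: rat. N \<noteq> 0 \<and> of_int N / of_nat n = q^2"
      using assms by (intro exI[of _ q]) auto
  qed
  then show ?thesis
    by (auto simp: is_squarefree_part_def)
qed

lemma sigma_conic_parametrisation:
  fixes \<sigma> r s :: "'a :: comm_ring_1"
  assumes "\<sigma>^2 = 1"
  defines "P \<equiv> r^2 + 2 * \<sigma> * r * s - s^2"
  shows "(r^2 + s^2)^2 = P^2 + 2 * (2 * r * s)^2 - 2 * \<sigma> * P * (2 * r * s)"
proof -
  have "P^2 + 2 * (2 * r * s)^2 - 2 * \<sigma> * P * (2 * r * s) =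
        (r^2 + s^2)^2 + 4 * r^2 * s^2 * (1 - \<sigma>^2)"
    unfolding P_def by (simp add: algebra_simps power2_eq_square)
  then show ?thesis
    using assms(1) by simp
qed

lemma sigma_congruent_if_squarefree_part:
  fixes \<sigma> r s :: int
  assumes "\<sigma>^2 = 1" "n > 0" "r > 0" "s > 0"
    and "is_squarefree_part (int n) (r * s * (r^2 + 2 * \<sigma> * r * s - s^2))"
  shows "sigma_congruent \<sigma> n"
proof -
  define P where "P = r^2 + 2 * \<sigma> * r * s - s^2"
  obtain Q :: rat where "Q > 0" and N: "of_int (r * s * P) = of_nat n * Q^2"
    using assms(2,5) unfolding P_def is_squarefree_part_iff[OF assms(2)] by blast
  then have "r * s * P > 0"
    using assms(2) by (metis of_int_0_less_iff of_nat_0_less_iff mult_pos_pos zero_less_power)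
  then have "P > 0"
    using assms(3,4) by (metis zero_less_mult_pos mult_pos_pos)
  define a where "a = of_int P / Q"
  define b where "b = 2 * of_int r * of_int s / Q"
  define c where "c = (of_int r ^ 2 + of_int s ^ 2) / Q"
  have "a > 0" "b > 0" "c > 0"
    using \<open>P > 0\<close> \<open>Q > 0\<close> assms(3,4) by (simp_all add: a_def b_def c_def add_pos_pos)
  moreover have "a * b = 2 * of_nat n"
    using N \<open>Q > 0\<close> by (simp add: a_def b_def field_simps power2_eq_square)
  moreover have "c^2 = a^2 + 2 * b^2 - 2 * of_int \<sigma> * a * b"
  proof -
    have "(of_int \<sigma> :: rat)^2 = 1"
      using assms(1) by (metis of_int_1 of_int_power)
    from sigma_conic_parametrisation[OF this, of "of_int r" "of_int s"]
    show ?thesis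
      using \<open>Q > 0\<close> by (simp add: a_def b_def c_def P_def field_simps power2_eq_square)
  qed
  ultimately show ?thesis
    unfolding sigma_congruent_def by blast
qed

lemma rat_pos_coprime_quotient:
  fixes x :: rat
  assumes "x > 0"
  obtains r s :: int where "r > 0" "s > 0" "coprime r s" "x = of_int s / of_int r"
proof (cases x)
  case (Fract s r)
  then have "s > 0"
    using assms by (simp add: zero_less_Fract_iff)
  with Fract show ?thesis
    by (intro that[of r s]) (simp_all add: coprime_commute Fract_of_int_quotient)
qed

text \<open>The slope b/u parametrises the lines through the rational point (a : b : c) = (-1 : 0 : 1)
  of the conic.\<close>
lemma sigma_conic_slope:
  fixes \<sigma> a b c :: "'a :: linordered_field"
  assumes "\<sigma>^2 = 1" "b > 0" "c > 0" "c^2 = a^2 + 2 * b^2 - 2 * \<sigma> * a * b"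
  defines "u \<equiv> c + a - \<sigma> * b"
  shows "u > 0" and "u^2 + 2 * \<sigma> * u * b - b^2 = 2 * a * u"
proof -
  have "(\<sigma> * b - a)^2 < c^2"
    using assms(1,2,4) by (simp add: power2_eq_square algebra_simps)
  then have "\<sigma> * b - a < c"
    using \<open>c > 0\<close> by (simp add: power2_less_imp_less)
  then show "u > 0"
    unfolding u_def by simp
  have "u^2 + 2 * \<sigma> * u * b - b^2 - 2 * a * u =
        c^2 - (a^2 + 2 * b^2 - 2 * \<sigma> * a * b) + (1 - \<sigma>^2) * b^2"
    unfolding u_def by (simp add: power2_eq_square algebra_simps)
  then show "u^2 + 2 * \<sigma> * u * b - b^2 = 2 * a * u"
    using assms(1,4) by simp
qed

lemma squarefree_part_if_sigma_congruent:
  fixes \<sigma> :: int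
  assumes "\<sigma>^2 = 1" "n > 0" "squarefree (int n)" "sigma_congruent \<sigma> n"
  shows "\<exists>r s :: int. r > 0 \<and> s > 0 \<and> coprime r s \<and>
           is_squarefree_part (int n) (r * s * (r^2 + 2 * \<sigma> * r * s - s^2))"
proof -
  define \<sigma>' :: rat where "\<sigma>' = of_int \<sigma>"
  have "\<sigma>'^2 = 1"
    using assms(1) unfolding \<sigma>'_def by (metis of_int_1 of_int_power)
  obtain a b c :: rat where "a > 0" "b > 0" "c > 0" and ab: "a * b = 2 * of_nat n"
    and abc: "c^2 = a^2 + 2 * b^2 - 2 * \<sigma>' * a * b"
    using assms(4) unfolding sigma_congruent_def \<sigma>'_def by blast
  define u where "u = c + a - \<sigma>' * b"
  have "u > 0" and chord: "u^2 + 2 * \<sigma>' * u * b - b^2 = 2 * a * u"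
    using sigma_conic_slope[OF \<open>\<sigma>'^2 = 1\<close> \<open>b > 0\<close> \<open>c > 0\<close> abc]
    unfolding u_def by auto
  obtain r s :: int where "r > 0" "s > 0" "coprime r s" and slope: "b / u = of_int s / of_int r"
    using \<open>b > 0\<close> \<open>u > 0\<close> rat_pos_coprime_quotient[of "b / u"] by auto
  define R S :: rat where "R = of_int r" and "S = of_int s"
  have S_eq: "S = R * b / u"
    using slope \<open>r > 0\<close> unfolding R_def S_def by (simp add: field_simps)
  have "R * S * (R^2 + 2 * \<sigma>' * R * S - S^2) =
        R^4 * b * (u^2 + 2 * \<sigma>' * u * b - b^2) / u^3"
    unfolding S_eq using \<open>u > 0\<close>
    by (simp add: field_simps power2_eq_square power3_eq_cube power4_eq_xxxx)
  also have "\<dots> = 2 * (a * b) * R^4 / u^2"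
    unfolding chord using \<open>u > 0\<close> by (simp add: power2_eq_square power3_eq_cube)
  also have "\<dots> = of_nat n * (2 * R^2 / u)^2"
    by (simp add: ab power2_eq_square power4_eq_xxxx)
  finally have "of_int (r * s * (r^2 + 2 * \<sigma> * r * s - s^2)) = of_nat n * (2 * R^2 / u)^2"
    by (simp add: R_def S_def \<sigma>'_def)
  moreover have "2 * R^2 / u > 0"
    using \<open>r > 0\<close> \<open>u > 0\<close> unfolding R_def by simp
  ultimately show ?thesis
    using \<open>r > 0\<close> \<open>s > 0\<close> \<open>coprime r s\<close> assms(2,3)
    by (auto simp: is_squarefree_part_iff)
qed

lemma sigma_congruent_iff_squarefree_part:
  fixes \<sigma> :: int
  assumes "\<sigma>^2 = 1" "n > 0" "squarefree n"
  shows "sigma_congruent \<sigma> n \<longleftrightarrow>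
    (\<exists>r s :: int. r > 0 \<and> s > 0 \<and> coprime r s \<and>
       is_squarefree_part (int n) (r * s * (r^2 + 2 * \<sigma> * r * s - s^2)))"
  using squarefree_part_if_sigma_congruent[OF assms(1,2) squarefree_int_of_nat[OF assms(3)]]
    sigma_congruent_if_squarefree_part[OF assms(1,2)] by blast

theorem proposition5p1:
  fixes n :: nat
  assumes "n > 1" and "squarefree n"
  shows "(pi4_congruent n \<longleftrightarrow>
            (\<exists>r s :: int. r > 0 \<and> s > 0 \<and> coprime r s \<and>
               is_squarefree_part (int n) (r * s * (r^2 + 2*r*s - s^2)))) \<and>
         (three_pi4_congruent n \<longleftrightarrow>
            (\<exists>r s :: int. r > 0 \<and> s > 0 \<and> coprime r s \<and>
               is_squarefree_part (int n) (r * s * (r^2 - 2*r*s - s^2))))"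
  using sigma_congruent_iff_squarefree_part[of 1 n] sigma_congruent_iff_squarefree_part[of "-1" n] assms
  by (simp add: pi4_congruent_iff_sigma_congruent three_pi4_congruent_iff_sigma_congruent)

end
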